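(* Let $X$ be a CAT(0) cube complex and $v,w$ vertices of $X$. Root $X$ at $v$ and identify $X$ with $X_P$, where $P=P(X,v)$ is the associated poset with inconsistent pairs. Then the vertex $w$ corresponds to a consistent order ideal $Q$ of $P$, and the vertices of the interval $X[v,w]$ correspond exactly to the order ideals of $Q$ (with the order induced from $P$). In particular, $X[v,w]\cong X_Q$, where $Q$ is regarded as a poset with no inconsistent pairs.
   Context: Hyperplanes: in a cube complex, call two edges of a cube equivalent if they are parallel in that cube, and extend transitively to an equivalence relation on all edges of $X$; each equivalence class determines a hyperplane (the union of the midcubes of the cubes orthogonal to those edges). For a rooted CAT(0) cube complex $(X,v)$, the poset with inconsistent pairs $P(X,v)$ has as elements the hyperplanes of $X$; $i<j$ if, starting from $v$, every edge path must cross hyperplane $i$ before crossing hyperplane $j$; and $\{i,j\}$ is inconsistent if no vertex of $X$ is separated from $v$ by both $i$ and $j$. The vertex $x$ of $X$ is identified with the set of hyperplanes separating $x$ from $v$; these sets are exactly the consistent order ideals of $P$, and this identifies $X$ with the cube complex $X_P$ (vertices = consistent order ideals; a cube $C(I,M)$ for each consistent order ideal $I$ and $M\subseteq I_{\max}$, with vertices $I\setminus S$, $S\subseteq M$). A poset with inconsistent pairs is a locally finite poset of finite width with a set of pairs $\{p,q\}$ such that inconsistent pairs have no common upper bound and pairs above inconsistent pairs are inconsistent. The interval $X[v,w]$ is the subcomplex of $X$ consisting of all cubes all of whose vertices lie on at least one edge geodesic (shortest path in the 1-skeleton) between $v$ and $w$. *)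

theory Defs
  imports Main
begin

definition antichain :: "('a \<Rightarrow> 'a \<Rightarrow> bool) \<Rightarrow> 'a set \<Rightarrow> bool" where
  "antichain le A \<longleftrightarrow> (\<forall>x\<in>A. \<forall>y\<in>A. le x y \<longrightarrow> x = y)"

definition pip :: "'a set \<Rightarrow> ('a \<Rightarrow> 'a \<Rightarrow> bool) \<Rightarrow> ('a \<Rightarrow> 'a \<Rightarrow> bool) \<Rightarrow> bool" where
  "pip E le inc \<longleftrightarrow>
     (\<forall>x\<in>E. le x x) \<and>
     (\<forall>x\<in>E. \<forall>y\<in>E. le x y \<and> le y x \<longrightarrow> x = y) \<and>
     (\<forall>x\<in>E. \<forall>y\<in>E. \<forall>z\<in>E. le x y \<and> le y z \<longrightarrow> le x z) \<and>
     (\<forall>x\<in>E. \<forall>y\<in>E. finite {z\<in>E. le x z \<and> le z y}) \<and>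
     (\<exists>n::nat. \<forall>A. A \<subseteq> E \<and> antichain le A \<longrightarrow> finite A \<and> card A \<le> n) \<and>
     (\<forall>p q. inc p q \<longrightarrow> p \<in> E \<and> q \<in> E) \<and>
     (\<forall>p q. inc p q \<longrightarrow> inc q p) \<and>
     (\<forall>p q. inc p q \<longrightarrow> \<not> (\<exists>r\<in>E. le p r \<and> le q r)) \<and>
     (\<forall>p q p' q'. inc p q \<and> p' \<in> E \<and> q' \<in> E \<and> le p p' \<and> le q q' \<longrightarrow> inc p' q')"

definition order_ideal :: "'a set \<Rightarrow> ('a \<Rightarrow> 'a \<Rightarrow> bool) \<Rightarrow> 'a set \<Rightarrow> bool" where
  "order_ideal E le I \<longleftrightarrow> I \<subseteq> E \<and> (\<forall>x\<in>I. \<forall>y\<in>E. le y x \<longrightarrow> y \<in> I)"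

definition consistent :: "('a \<Rightarrow> 'a \<Rightarrow> bool) \<Rightarrow> 'a set \<Rightarrow> bool" where
  "consistent inc I \<longleftrightarrow> (\<forall>x\<in>I. \<forall>y\<in>I. \<not> inc x y)"

definition vertices :: "'a set \<Rightarrow> ('a \<Rightarrow> 'a \<Rightarrow> bool) \<Rightarrow> ('a \<Rightarrow> 'a \<Rightarrow> bool) \<Rightarrow> 'a set set" where
  "vertices E le inc = {I. finite I \<and> order_ideal E le I \<and> consistent inc I}"

definition maxs :: "('a \<Rightarrow> 'a \<Rightarrow> bool) \<Rightarrow> 'a set \<Rightarrow> 'a set" where
  "maxs le I = {m\<in>I. \<forall>x\<in>I. le m x \<longrightarrow> x = m}"

text \<open>The cube C(I,M), represented by its set of vertices.\<close>
definition cube_verts :: "'a set \<Rightarrow> 'a set \<Rightarrow> 'a set set" where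
  "cube_verts I M = {I - S | S. S \<subseteq> M}"

definition cubes :: "'a set \<Rightarrow> ('a \<Rightarrow> 'a \<Rightarrow> bool) \<Rightarrow> ('a \<Rightarrow> 'a \<Rightarrow> bool) \<Rightarrow> 'a set set set" where
  "cubes E le inc = {cube_verts I M | I M. I \<in> vertices E le inc \<and> M \<subseteq> maxs le I}"

definition adjacent :: "'a set \<Rightarrow> ('a \<Rightarrow> 'a \<Rightarrow> bool) \<Rightarrow> ('a \<Rightarrow> 'a \<Rightarrow> bool) \<Rightarrow> 'a set \<Rightarrow> 'a set \<Rightarrow> bool" where
  "adjacent E le inc I J \<longleftrightarrow>
     (I \<in> vertices E le inc \<and> (\<exists>m\<in>maxs le I. J = I - {m})) \<or>
     (J \<in> vertices E le inc \<and> (\<exists>m\<in>maxs le J. I = J - {m}))"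

definition edge_path :: "'a set \<Rightarrow> ('a \<Rightarrow> 'a \<Rightarrow> bool) \<Rightarrow> ('a \<Rightarrow> 'a \<Rightarrow> bool) \<Rightarrow> 'a set list \<Rightarrow> bool" where
  "edge_path E le inc p \<longleftrightarrow> p \<noteq> [] \<and> set p \<subseteq> vertices E le inc \<and>
     (\<forall>i. Suc i < length p \<longrightarrow> adjacent E le inc (p ! i) (p ! Suc i))"

definition geodesic :: "'a set \<Rightarrow> ('a \<Rightarrow> 'a \<Rightarrow> bool) \<Rightarrow> ('a \<Rightarrow> 'a \<Rightarrow> bool) \<Rightarrow> 'a set list \<Rightarrow> 'a set \<Rightarrow> 'a set \<Rightarrow> bool" where
  "geodesic E le inc p a b \<longleftrightarrow> edge_path E le inc p \<and> hd p = a \<and> last p = b \<and>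
     (\<forall>q. edge_path E le inc q \<and> hd q = a \<and> last q = b \<longrightarrow> length p \<le> length q)"

definition on_geodesic :: "'a set \<Rightarrow> ('a \<Rightarrow> 'a \<Rightarrow> bool) \<Rightarrow> ('a \<Rightarrow> 'a \<Rightarrow> bool) \<Rightarrow> 'a set \<Rightarrow> 'a set \<Rightarrow> 'a set set" where
  "on_geodesic E le inc a b = {x. \<exists>p. geodesic E le inc p a b \<and> x \<in> set p}"

definition interval_cubes :: "'a set \<Rightarrow> ('a \<Rightarrow> 'a \<Rightarrow> bool) \<Rightarrow> ('a \<Rightarrow> 'a \<Rightarrow> bool) \<Rightarrow> 'a set \<Rightarrow> 'a set \<Rightarrow> 'a set set set" where
  "interval_cubes E le inc a b = {C \<in> cubes E le inc. C \<subseteq> on_geodesic E le inc a b}"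

definition interval_vertices :: "'a set \<Rightarrow> ('a \<Rightarrow> 'a \<Rightarrow> bool) \<Rightarrow> ('a \<Rightarrow> 'a \<Rightarrow> bool) \<Rightarrow> 'a set \<Rightarrow> 'a set \<Rightarrow> 'a set set" where
  "interval_vertices E le inc a b = {x. {x} \<in> interval_cubes E le inc a b}"

end

theory Submission
  imports Defs
begin

text \<open>Every edge of \<open>X\<^sub>P\<close> adds or removes a single element of \<open>P\<close>, so an edge path from
  \<open>\<emptyset>\<close> to \<open>Q\<close> through a vertex \<open>x\<close> has at least \<open>|x| + |x \<triangle> Q|\<close> edges, while
  \<open>|Q|\<close> edges suffice: starting from \<open>\<emptyset>\<close> one can add minimal elements of \<open>Q\<close> one at a time, and
  every order ideal \<open>x \<subseteq> Q\<close> is met on the way if the elements of \<open>x\<close> are added first. Hence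
  the vertices on geodesics from \<open>\<emptyset>\<close> to \<open>Q\<close> are exactly the consistent order ideals contained
  in \<open>Q\<close>, i.e. the order ideals of \<open>Q\<close>, and a cube \<open>C(I,M)\<close> lies in the interval iff its top
  vertex \<open>I\<close> does.\<close>

lemma sym_diff_triangle: "sym_diff A C \<subseteq> sym_diff A B \<union> sym_diff B C"
  by blast

lemma pip_antisym:
  assumes "pip E le inc" "x \<in> E" "y \<in> E" "le x y" "le y x"
  shows "x = y"
proof -
  have "\<forall>x\<in>E. \<forall>y\<in>E. le x y \<and> le y x \<longrightarrow> x = y"
    using assms(1) unfolding pip_def by (elim conjE)
  then show ?thesis
    using assms(2-) by blast
qed

lemma pip_trans:
  assumes "pip E le inc" "x \<in> E" "y \<in> E" "z \<in> E" "le x y" "le y z"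
  shows "le x z"
proof -
  have "\<forall>x\<in>E. \<forall>y\<in>E. \<forall>z\<in>E. le x y \<and> le y z \<longrightarrow> le x z"
    using assms(1) unfolding pip_def by (elim conjE)
  then show ?thesis
    using assms(2-) by blast
qed

lemma pip_finite_has_minimal:
  assumes "pip E le inc" "finite A" "A \<noteq> {}" "A \<subseteq> E"
  shows "\<exists>m\<in>A. \<forall>x\<in>A. le x m \<longrightarrow> x = m"
proof -
  let ?R = "\<lambda>x y. le x y \<and> x \<noteq> y"
  have asym: "asymp_on A ?R"
  proof (rule asymp_onI)
    fix x y assume "x \<in> A" "y \<in> A" "?R x y"
    then show "\<not> ?R y x"
      using assms(4) pip_antisym[OF assms(1), of x y] by blast
  qed
  have trans: "transp_on A ?R"
  proof (rule transp_onI)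
    fix x y z assume "x \<in> A" "y \<in> A" "z \<in> A" and xy: "?R x y" and yz: "?R y z"
    then have E: "x \<in> E" "y \<in> E" "z \<in> E"
      using assms(4) by blast+
    have "le x z"
      using pip_trans[OF assms(1) E] xy yz by blast
    moreover have "x \<noteq> z"
      using pip_antisym[OF assms(1) E(1,2)] xy yz by blast
    ultimately show "?R x z" ..
  qed
  then show ?thesis
    using Finite_Set.bex_min_element[OF assms(2) asym trans assms(3)] by blast
qed

lemma adjacent_sym_diff: "adjacent E le inc I J \<Longrightarrow> \<exists>m. sym_diff I J = {m}"
  unfolding adjacent_def maxs_def by blast

lemma edge_path_Cons_iff:
  "edge_path E le inc (x # y # p) \<longleftrightarrow>
     x \<in> vertices E le inc \<and> adjacent E le inc x y \<and> edge_path E le inc (y # p)"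
  unfolding edge_path_def by (auto simp: nth_Cons split: nat.split)

lemma edge_path_append:
  "edge_path E le inc p \<Longrightarrow> edge_path E le inc q \<Longrightarrow> last p = hd q \<Longrightarrow>
    edge_path E le inc (p @ tl q)"
proof (induction p rule: induct_list012)
  case 1
  then show ?case by (simp add: edge_path_def)
next
  case (2 x)
  then show ?case by (cases q) auto
next
  case (3 x y p)
  then show ?case by (auto simp: edge_path_Cons_iff)
qed

text \<open>Every edge changes the symmetric difference with a fixed set by at most one element.\<close>

lemma edge_path_length_gt:
  "edge_path E le inc p \<Longrightarrow> card (sym_diff (hd p) (last p)) < length p"
proof (induction p rule: induct_list012)
  case 1
  then show ?case by (simp add: edge_path_def)
next
  case (2 x)
  then show ?case by simp
next
  case (3 x y p)
  let ?b = "last (y # p)"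
  have adj: "adjacent E le inc x y" and path: "edge_path E le inc (y # p)"
    using "3.prems" by (auto simp: edge_path_Cons_iff)
  obtain m where m: "sym_diff x y = {m}"
    using adjacent_sym_diff[OF adj] by blast
  have "?b \<in> vertices E le inc" "y \<in> vertices E le inc"
    using path last_in_set[of "y # p"] by (auto simp: edge_path_def)
  then have fin: "finite (sym_diff y ?b)"
    by (simp add: vertices_def)
  then have "card (sym_diff x ?b) \<le> card (insert m (sym_diff y ?b))"
    using sym_diff_triangle[of x ?b y] m by (intro card_mono) auto
  also have "\<dots> \<le> Suc (card (sym_diff y ?b))"
    using fin by (simp add: card_insert_if)
  finally show ?case
    using "3.IH"(2)[OF path] by simp
qed

lemma vertices_downward_closed:
  "J \<in> vertices E le inc \<Longrightarrow> order_ideal E le I \<Longrightarrow> I \<subseteq> J \<Longrightarrow> I \<in> vertices E le inc"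
  unfolding vertices_def consistent_def by (auto intro: finite_subset)

lemma remove_maxs_vertex:
  "I \<in> vertices E le inc \<Longrightarrow> S \<subseteq> maxs le I \<Longrightarrow> I - S \<in> vertices E le inc"
  unfolding vertices_def order_ideal_def consistent_def maxs_def by blast

lemma insert_minimal_adjacent:
  assumes J: "J \<in> vertices E le inc" and I: "order_ideal E le I" "I \<subseteq> J"
    and m: "m \<in> J - I" "\<forall>x\<in>J - I. le x m \<longrightarrow> x = m"
  shows "order_ideal E le (insert m I)" "adjacent E le inc I (insert m I)"
proof -
  have JE: "order_ideal E le J"
    using J by (simp add: vertices_def)
  show ideal: "order_ideal E le (insert m I)"
    using I JE m unfolding order_ideal_def by blast
  have "insert m I \<in> vertices E le inc"
    using vertices_downward_closed[OF J ideal] I(2) m(1) by blast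
  moreover have "m \<in> maxs le (insert m I)"
    using I(1) JE m(1) unfolding maxs_def order_ideal_def by blast
  moreover have "I = insert m I - {m}"
    using m(1) by blast
  ultimately show "adjacent E le inc I (insert m I)"
    unfolding adjacent_def by blast
qed

lemma ascending_edge_path:
  assumes pip: "pip E le inc" and J: "J \<in> vertices E le inc"
  shows "order_ideal E le I \<Longrightarrow> I \<subseteq> J \<Longrightarrow>
    \<exists>p. edge_path E le inc p \<and> hd p = I \<and> last p = J \<and> length p = card (J - I) + 1"
proof (induction "card (J - I)" arbitrary: I)
  case 0
  have "finite J"
    using J by (simp add: vertices_def)
  with 0 have "I = J"
    by (metis Diff_eq_empty_iff card_0_eq finite_Diff subset_antisym)
  then show ?case
    using J by (intro exI[of _ "[J]"]) (simp add: edge_path_def)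
next
  case (Suc n)
  have "finite J" "J \<subseteq> E"
    using J by (auto simp: vertices_def order_ideal_def)
  moreover have "J - I \<noteq> {}"
    using Suc.hyps(2) by (metis card.empty nat.distinct(1))
  ultimately obtain m where m: "m \<in> J - I" "\<forall>x\<in>J - I. le x m \<longrightarrow> x = m"
    using pip_finite_has_minimal[OF pip, of "J - I"] by blast
  note step = insert_minimal_adjacent[OF J Suc.prems m]
  have "J - insert m I = (J - I) - {m}"
    by blast
  then have card: "card (J - insert m I) = n"
    using Suc.hyps(2) m(1) \<open>finite J\<close> by (simp add: card_Diff_singleton)
  have "insert m I \<subseteq> J"
    using Suc.prems(2) m(1) by blast
  then obtain p where p: "edge_path E le inc p" "hd p = insert m I" "last p = J"
      "length p = n + 1"
    using Suc.hyps(1)[OF card[symmetric] step(1)] card by metis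
  obtain q where q: "p = insert m I # q"
    using p(1,2) by (cases p) (auto simp: edge_path_def)
  have "I \<in> vertices E le inc"
    using vertices_downward_closed[OF J Suc.prems] .
  then have "edge_path E le inc (I # p)"
    using p(1) step(2) unfolding q by (simp add: edge_path_Cons_iff)
  then show ?case
    using p Suc.hyps(2) by (intro exI[of _ "I # p"]) (simp add: q)
qed

lemma last_append_tl: "last p = hd q \<Longrightarrow> q \<noteq> [] \<Longrightarrow> last (p @ tl q) = last q"
  by (cases q) auto

lemma edge_path_through:
  assumes pip: "pip E le inc" and Q: "Q \<in> vertices E le inc"
    and x: "x \<in> vertices E le inc" "x \<subseteq> Q"
  shows "\<exists>p. edge_path E le inc p \<and> hd p = {} \<and> last p = Q \<and> x \<in> set p \<and> length p = card Q + 1"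
proof -
  have "order_ideal E le {}" "order_ideal E le x"
    using x(1) by (auto simp: order_ideal_def vertices_def)
  then obtain p q where
      p: "edge_path E le inc p" "hd p = {}" "last p = x" "length p = card x + 1" and
      q: "edge_path E le inc q" "hd q = x" "last q = Q" "length q = card (Q - x) + 1"
    using ascending_edge_path[OF pip x(1), of "{}"] ascending_edge_path[OF pip Q, of x] x(2)
    by auto
  have ne: "p \<noteq> []" "q \<noteq> []"
    using p(1) q(1) by (auto simp: edge_path_def)
  have "finite Q" "finite x"
    using Q x(1) by (simp_all add: vertices_def)
  then have "card Q = card x + card (Q - x)"
    using x(2) card_mono[of Q x] by (simp add: card_Diff_subset)
  then show ?thesis
    using edge_path_append[OF p(1) q(1)] p q ne last_append_tl[of p q]
    by (intro exI[of _ "p @ tl q"]) auto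
qed

lemma edge_path_take: "edge_path E le inc p \<Longrightarrow> i < length p \<Longrightarrow> edge_path E le inc (take (Suc i) p)"
  unfolding edge_path_def by (auto dest: in_set_takeD)

lemma edge_path_drop: "edge_path E le inc p \<Longrightarrow> i < length p \<Longrightarrow> edge_path E le inc (drop i p)"
  unfolding edge_path_def by (auto dest: in_set_dropD simp: add.commute)

lemma card_sym_diff_bound_imp_subset:
  assumes "finite x" "finite Q" "card x + card (sym_diff x Q) \<le> card Q"
  shows "x \<subseteq> Q"
proof -
  have "card (sym_diff x Q) = card (x - Q) + card (Q - x)"
    using assms(1,2) by (subst card_Un_disjoint) auto
  moreover have "card x = card (x \<inter> Q) + card (x - Q)" "card Q = card (x \<inter> Q) + card (Q - x)"
    using card_Int_Diff[OF assms(1), of Q] card_Int_Diff[OF assms(2), of x] by (simp_all add: Int_commute)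
  ultimately have "card (x - Q) = 0"
    using assms(3) by linarith
  then show ?thesis
    using assms(1) by simp
qed

lemma edge_path_vertex_bound:
  assumes p: "edge_path E le inc p" "hd p = {}" "last p = Q" and x: "x \<in> set p"
  shows "card x + card (sym_diff x Q) < length p"
proof -
  obtain i where i: "i < length p" "x = p ! i"
    using x by (auto simp: in_set_conv_nth)
  have "hd (take (Suc i) p) = {}"
    using p(2) by simp
  moreover have "last (take (Suc i) p) = x"
    using i by (simp add: take_Suc_conv_app_nth)
  ultimately have prefix: "card x < Suc i"
    using edge_path_length_gt[OF edge_path_take[OF p(1) i(1)]] i(1) by simp
  have "hd (drop i p) = x" "last (drop i p) = Q"
    using p(3) i by (simp_all add: hd_drop_conv_nth)
  then have "card (sym_diff x Q) < length p - i"
    using edge_path_length_gt[OF edge_path_drop[OF p(1) i(1)]] by simp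
  then show ?thesis
    using prefix by linarith
qed

lemma on_geodesic_from_empty:
  assumes pip: "pip E le inc" and Q: "Q \<in> vertices E le inc"
  shows "on_geodesic E le inc {} Q = {x \<in> vertices E le inc. x \<subseteq> Q}"
proof (intro set_eqI iffI)
  fix x assume "x \<in> on_geodesic E le inc {} Q"
  then obtain p where g: "geodesic E le inc p {} Q" and x: "x \<in> set p"
    unfolding on_geodesic_def by blast
  have p: "edge_path E le inc p" "hd p = {}" "last p = Q"
    using g by (auto simp: geodesic_def)
  have xv: "x \<in> vertices E le inc"
    using p(1) x by (auto simp: edge_path_def)
  obtain q where "edge_path E le inc q" "hd q = {}" "last q = Q" "length q = card Q + 1"
    using edge_path_through[OF pip Q Q] by blast
  then have "length p \<le> card Q + 1"
    using g unfolding geodesic_def by metis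
  then have "card x + card (sym_diff x Q) \<le> card Q"
    using edge_path_vertex_bound[OF p x] by linarith
  then have "x \<subseteq> Q"
    using xv Q by (intro card_sym_diff_bound_imp_subset) (auto simp: vertices_def)
  then show "x \<in> {x \<in> vertices E le inc. x \<subseteq> Q}"
    using xv by blast
next
  fix x assume "x \<in> {x \<in> vertices E le inc. x \<subseteq> Q}"
  then obtain p where p: "edge_path E le inc p" "hd p = {}" "last p = Q" "x \<in> set p"
      "length p = card Q + 1"
    using edge_path_through[OF pip Q] by blast
  have "geodesic E le inc p {} Q"
    unfolding geodesic_def
  proof (intro conjI allI impI)
    fix q assume "edge_path E le inc q \<and> hd q = {} \<and> last q = Q"
    then show "length p \<le> length q"
      using edge_path_length_gt[of E le inc q] p(5) by auto
  qed (use p in auto)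
  then show "x \<in> on_geodesic E le inc {} Q"
    using p(4) unfolding on_geodesic_def by blast
qed

lemma order_ideal_of_vertex_iff:
  assumes "Q \<in> vertices E le inc"
  shows "order_ideal Q le I \<longleftrightarrow> I \<in> vertices E le inc \<and> I \<subseteq> Q"
proof
  assume I: "order_ideal Q le I"
  then have "I \<subseteq> Q"
    by (simp add: order_ideal_def)
  moreover have "order_ideal E le I"
    using I assms unfolding order_ideal_def vertices_def by blast
  ultimately show "I \<in> vertices E le inc \<and> I \<subseteq> Q"
    using vertices_downward_closed[OF assms] by blast
next
  assume "I \<in> vertices E le inc \<and> I \<subseteq> Q"
  then show "order_ideal Q le I"
    using assms unfolding vertices_def order_ideal_def by blast
qed

lemma vertices_below_vertex:
  assumes "Q \<in> vertices E le inc"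
  shows "vertices Q le (\<lambda>_ _. False) = {I \<in> vertices E le inc. I \<subseteq> Q}"
proof (intro set_eqI)
  fix I
  have "I \<in> vertices Q le (\<lambda>_ _. False) \<longleftrightarrow> finite I \<and> order_ideal Q le I"
    by (simp add: vertices_def consistent_def)
  also have "\<dots> \<longleftrightarrow> I \<in> vertices E le inc \<and> I \<subseteq> Q"
    using order_ideal_of_vertex_iff[OF assms] by (auto simp: vertices_def)
  finally show "I \<in> vertices Q le (\<lambda>_ _. False) \<longleftrightarrow> I \<in> {I \<in> vertices E le inc. I \<subseteq> Q}"
    by simp
qed

lemma singleton_in_cubes_iff: "{x} \<in> cubes E le inc \<longleftrightarrow> x \<in> vertices E le inc"
proof
  assume "{x} \<in> cubes E le inc"
  then obtain I M where cube: "{x} = cube_verts I M" and I: "I \<in> vertices E le inc"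
    unfolding cubes_def by blast
  have "I \<in> cube_verts I M"
    unfolding cube_verts_def by blast
  then have "I = x"
    unfolding cube[symmetric] by simp
  then show "x \<in> vertices E le inc"
    using I by simp
next
  assume "x \<in> vertices E le inc"
  moreover have "{x} = cube_verts x {}"
    unfolding cube_verts_def by simp
  ultimately show "{x} \<in> cubes E le inc"
    unfolding cubes_def by blast
qed

lemma cube_verts_below_iff:
  assumes "I \<in> vertices E le inc" "M \<subseteq> maxs le I"
  shows "cube_verts I M \<subseteq> {x \<in> vertices E le inc. x \<subseteq> Q} \<longleftrightarrow> I \<subseteq> Q"
proof -
  have "cube_verts I M \<subseteq> vertices E le inc"
    unfolding cube_verts_def using remove_maxs_vertex[OF assms(1)] assms(2) by blast
  moreover have "I \<in> cube_verts I M" "\<forall>y\<in>cube_verts I M. y \<subseteq> I"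
    unfolding cube_verts_def by blast+
  ultimately show ?thesis
    by blast
qed

lemma cubes_below_vertex:
  assumes "Q \<in> vertices E le inc"
  shows "{C \<in> cubes E le inc. C \<subseteq> {x \<in> vertices E le inc. x \<subseteq> Q}} = cubes Q le (\<lambda>_ _. False)"
proof (intro set_eqI iffI)
  fix C assume "C \<in> {C \<in> cubes E le inc. C \<subseteq> {x \<in> vertices E le inc. x \<subseteq> Q}}"
  then obtain I M where C: "C = cube_verts I M" "I \<in> vertices E le inc" "M \<subseteq> maxs le I"
      "cube_verts I M \<subseteq> {x \<in> vertices E le inc. x \<subseteq> Q}"
    unfolding cubes_def by blast
  then have "I \<subseteq> Q"
    using cube_verts_below_iff[OF C(2,3)] by blast
  then have "I \<in> vertices Q le (\<lambda>_ _. False)"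
    using C(2) vertices_below_vertex[OF assms] by blast
  then show "C \<in> cubes Q le (\<lambda>_ _. False)"
    using C unfolding cubes_def by blast
next
  fix C assume "C \<in> cubes Q le (\<lambda>_ _. False)"
  then obtain I M where C: "C = cube_verts I M" "I \<in> vertices Q le (\<lambda>_ _. False)" "M \<subseteq> maxs le I"
    unfolding cubes_def by blast
  then have I: "I \<in> vertices E le inc" "I \<subseteq> Q"
    using vertices_below_vertex[OF assms] by blast+
  then have "cube_verts I M \<subseteq> {x \<in> vertices E le inc. x \<subseteq> Q}"
    using cube_verts_below_iff[OF I(1) C(3)] by blast
  then show "C \<in> {C \<in> cubes E le inc. C \<subseteq> {x \<in> vertices E le inc. x \<subseteq> Q}}"
    using C I unfolding cubes_def by blast
qed

theorem lemma3p2: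
  fixes E :: "'a set" and le inc :: "'a \<Rightarrow> 'a \<Rightarrow> bool" and Q :: "'a set"
  assumes "pip E le inc"
    and "Q \<in> vertices E le inc"
  shows "interval_vertices E le inc {} Q = {I. order_ideal Q le I} \<and>
         interval_cubes E le inc {} Q = cubes Q le (\<lambda>_ _. False)"
proof
  note geodesics = on_geodesic_from_empty[OF assms]
  show "interval_vertices E le inc {} Q = {I. order_ideal Q le I}"
    unfolding interval_vertices_def interval_cubes_def geodesics
    by (simp add: singleton_in_cubes_iff order_ideal_of_vertex_iff[OF assms(2)])
  show "interval_cubes E le inc {} Q = cubes Q le (\<lambda>_ _. False)"
    unfolding interval_cubes_def geodesics by (rule cubes_below_vertex[OF assms(2)])
qed

end
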